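(* Let $\Omega$ be a Cantor group with identity $e$ and let $T$ be a minimal translation of $\Omega$. For $f\in C(\Omega,\mathbb{R})$ let $F(\omega)=(f(T^n(\omega)))_{n\in\mathbb{Z}}\in\ell^\infty(\mathbb{Z})$. Then there exists $f\in C(\Omega,\mathbb{R})$ such that $\mathrm{hull}(F(e))\cong\Omega$ as topological groups.
   Context: A Cantor group is a totally disconnected compact abelian topological group without isolated points. A translation of a topological group $\Omega$ is a map $T(\omega)=\omega\cdot\omega_0$ for some fixed $\omega_0\in\Omega$; it is minimal if $\{T^n(\omega):n\in\mathbb{Z}\}$ is dense in $\Omega$ for every $\omega$. $\sigma$ is the left shift on $\ell^\infty(\mathbb{Z})$ (sup norm), $(\sigma d)_n=d_{n+1}$, and $\mathrm{hull}(d)$ is the closure of $\{\sigma^k d:k\in\mathbb{Z}\}$. In this setting $F(e)$ is limit-periodic (a uniform limit of periodic sequences), and for a limit-periodic $d$, $\mathrm{hull}(d)$ carries a unique topological group structure with identity $d$ such that $k\mapsto\sigma^k(d)$ is a homomorphism; this is the group structure on $\mathrm{hull}(F(e))$. *)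

theory Defs
  imports "HOL-Analysis.Analysis" "HOL-Algebra.Group"
begin

definition totally_disconnected_space :: "'a::topological_space itself \<Rightarrow> bool" where
  "totally_disconnected_space _ \<longleftrightarrow> (\<forall>S::'a set. connected S \<longrightarrow> (\<exists>a. S \<subseteq> {a}))"

definition cantor_group :: "'a::{t2_space, ab_group_add} itself \<Rightarrow> bool" where
  "cantor_group t \<longleftrightarrow>
     continuous_on UNIV (\<lambda>(x::'a, y). x + y) \<and>
     continuous_on UNIV (uminus :: 'a \<Rightarrow> 'a) \<and>
     compact (UNIV :: 'a set) \<and>
     totally_disconnected_space t \<and>
     (\<forall>x::'a. \<not> open {x})"

definition zpow :: "('a \<Rightarrow> 'a) \<Rightarrow> int \<Rightarrow> 'a \<Rightarrow> 'a" where
  "zpow T n = (if 0 \<le> n then T ^^ nat n else (Hilbert_Choice.inv T) ^^ nat (- n))"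

definition is_translation :: "('a::ab_group_add \<Rightarrow> 'a) \<Rightarrow> bool" where
  "is_translation T \<longleftrightarrow> (\<exists>\<omega>0. \<forall>\<omega>. T \<omega> = \<omega> + \<omega>0)"

definition minimal_map :: "('a::topological_space \<Rightarrow> 'a) \<Rightarrow> bool" where
  "minimal_map T \<longleftrightarrow> (\<forall>\<omega>. closure (range (\<lambda>n::int. zpow T n \<omega>)) = UNIV)"

text \<open>The left shift on \<open>\<ell>\<^sup>\<infinity>(\<int>)\<close>, modelled as bounded (automatically continuous)
  functions \<open>int \<Rightarrow>\<^sub>C real\<close> with the sup norm.\<close>
definition shift :: "(int \<Rightarrow>\<^sub>C real) \<Rightarrow> (int \<Rightarrow>\<^sub>C real)" where
  "shift d = Bcontfun (\<lambda>n. apply_bcontfun d (n + 1))"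

definition shift_hull :: "(int \<Rightarrow>\<^sub>C real) \<Rightarrow> (int \<Rightarrow>\<^sub>C real) set" where
  "shift_hull d = closure (range (\<lambda>k::int. zpow shift k d))"

definition orbit_seq :: "('a \<Rightarrow> real) \<Rightarrow> ('a \<Rightarrow> 'a) \<Rightarrow> 'a \<Rightarrow> (int \<Rightarrow>\<^sub>C real)" where
  "orbit_seq f T \<omega> = Bcontfun (\<lambda>n. f (zpow T n \<omega>))"

definition hull_tgroup :: "(int \<Rightarrow>\<^sub>C real) \<Rightarrow> (int \<Rightarrow>\<^sub>C real) monoid \<Rightarrow> bool" where
  "hull_tgroup d G \<longleftrightarrow>
     group G \<and> carrier G = shift_hull d \<and> \<one>\<^bsub>G\<^esub> = d \<and>
     continuous_on (shift_hull d \<times> shift_hull d) (\<lambda>(x, y). x \<otimes>\<^bsub>G\<^esub> y) \<and>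
     continuous_on (shift_hull d) (\<lambda>x. inv\<^bsub>G\<^esub> x) \<and>
     (\<forall>j k::int. zpow shift (j + k) d = zpow shift j d \<otimes>\<^bsub>G\<^esub> zpow shift k d)"

definition tgroup_iso_to :: "(int \<Rightarrow>\<^sub>C real) monoid \<Rightarrow> ((int \<Rightarrow>\<^sub>C real) \<Rightarrow> 'a::{topological_space, ab_group_add}) \<Rightarrow> bool" where
  "tgroup_iso_to G \<phi> \<longleftrightarrow>
     (\<exists>\<psi>. homeomorphism (carrier G) (UNIV :: 'a set) \<phi> \<psi>) \<and>
     (\<forall>x\<in>carrier G. \<forall>y\<in>carrier G. \<phi> (x \<otimes>\<^bsub>G\<^esub> y) = \<phi> x + \<phi> y)"

end

theory Submission
  imports Defs
begin

text \<open>Let \<open>orbit0 n = T\<^sup>n 0\<close>; by minimality this is a homomorphism \<open>\<int> \<rightarrow> \<Omega>\<close> with dense image.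
  The closure of the multiples of \<open>orbit0 n\<close> is a closed subgroup covered by \<open>n\<close> of its
  translates, hence open. A compact totally disconnected group has a base of clopen
  neighbourhoods of \<open>0\<close>, each containing an open subgroup (the stabiliser of the clopen set), and an
  open subgroup contains some \<open>orbit0 k \<noteq> 0\<close>; so these countably many subgroups form a neighbourhood
  base at \<open>0\<close>. The sum \<open>f\<close> of their indicator functions with weights \<open>2\<^sup>-\<^sup>m\<close> is uniformly continuous,
  and \<open>f p = f 0\<close> only for \<open>p = 0\<close>. Therefore \<open>F\<close> is a continuous injection of the compact \<open>\<Omega>\<close>,
  i.e. a homeomorphism onto \<open>hull(F 0)\<close> sending \<open>orbit0 k\<close> to \<open>\<sigma>\<^sup>k (F 0)\<close>. Transporting the group law
  of \<open>\<Omega>\<close> along \<open>F\<close> gives the required group structure on the hull, and any admissible structure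
  agrees with the transported one on the dense orbit of \<open>F 0\<close>, hence everywhere by continuity.\<close>

lemma compact_totally_disconnected_clopen_nbhd:
  fixes V :: "'a::t2_space set"
  assumes compact: "compact (UNIV::'a set)" and td: "totally_disconnected_space TYPE('a)"
    and "open V" "x \<in> V"
  shows "\<exists>C. open C \<and> closed C \<and> x \<in> C \<and> C \<subseteq> V"
proof -
  let ?X = "euclidean :: 'a topology"
  have "connected (connected_component_of_set ?X x)"
    using connectedin_connected_component_of[of ?X x] by simp
  then obtain a where "connected_component_of_set ?X x \<subseteq> {a}"
    using td unfolding totally_disconnected_space_def by blast
  then have "connected_component_of_set ?X x = {x}"
    using connected_component_of_refl[of ?X x] by auto
  moreover have "Hausdorff_space ?X"
    unfolding Hausdorff_space_def using hausdorff by (fastforce simp: disjnt_iff)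
  then have "quasi_component_of ?X x = connected_component_of ?X x"
    using compact by (intro quasi_eq_connected_component_of) (simp_all add: compact_space_def)
  ultimately have "{x} \<in> quasi_components_of ?X"
    using quasi_component_in_quasi_components_of[of ?X x] by simp
  moreover have "compactin ?X (- V)"
    using compact \<open>open V\<close> by (metis closed_Compl compact_Int_closed inf_top_left compactin_euclidean_iff)
  ultimately have "separated_between ?X {x} (- V)"
    using separated_between_quasi_component_compact \<open>x \<in> V\<close> by fastforce
  then obtain U W where UW: "open U" "open W" "U \<union> W = UNIV" "disjnt U W" "x \<in> U" "- V \<subseteq> W"
    unfolding separated_between_def by auto
  then have "U = - W" by (auto simp: disjnt_iff)
  with UW show ?thesis by (intro exI[of _ U]) auto
qed

lemma continuous_on_closure_eq:
  fixes f g :: "'a::topological_space \<Rightarrow> 'b::t2_space"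
  assumes "continuous_on (closure S) f" "continuous_on (closure S) g"
    and "\<And>x. x \<in> S \<Longrightarrow> f x = g x" and "x \<in> closure S"
  shows "f x = g x"
proof -
  let ?E = "closure S \<inter> (\<lambda>x. (f x, g x)) -` {y. \<exists>v. y = (v, v)}"
  have "closed ?E"
    using assms(1,2) by (intro continuous_closed_preimage continuous_on_Pair closed_diagonal) simp_all
  moreover have "S \<subseteq> ?E"
    using assms(3) closure_subset by auto
  ultimately have "closure S \<subseteq> ?E"
    by (rule closure_minimal[rotated])
  with assms(4) show ?thesis by auto
qed

section \<open>Integer iterates and the shift\<close>

lemma zpow_0 [simp]: "zpow T 0 x = x"
  by (simp add: zpow_def)

lemma zpow_succ:
  assumes "bij T"
  shows "zpow T (n + 1) x = T (zpow T n x)"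
proof (cases "0 \<le> n")
  case True
  then have "nat (n + 1) = Suc (nat n)" by simp
  with True show ?thesis by (simp add: zpow_def)
next
  case False
  define m where "m = nat (- n - 1)"
  have "nat (- n) = Suc m" using False by (simp add: m_def)
  then have "zpow T n x = Hilbert_Choice.inv T ((Hilbert_Choice.inv T ^^ m) x)"
    using False by (simp add: zpow_def)
  then have "T (zpow T n x) = (Hilbert_Choice.inv T ^^ m) x"
    using assms by (simp add: bij_is_surj surj_f_inv_f)
  moreover have "zpow T (n + 1) x = (Hilbert_Choice.inv T ^^ m) x"
    using False by (cases "n + 1 = 0") (simp_all add: zpow_def m_def)
  ultimately show ?thesis by simp
qed

lemma zpow_add:
  assumes "bij T"
  shows "zpow T (j + k) x = zpow T j (zpow T k x)"
proof (induction j rule: int_induct[where k=0])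
  case (step1 i)
  then show ?case using zpow_succ[OF assms, of "i + k" x] zpow_succ[OF assms, of i]
    by (simp add: algebra_simps)
next
  case (step2 i)
  have "T (zpow T (i - 1 + k) x) = T (zpow T (i - 1) (zpow T k x))"
    using step2 zpow_succ[OF assms, of "i - 1 + k" x] zpow_succ[OF assms, of "i - 1"]
    by (simp add: algebra_simps)
  then show ?case using assms by (simp add: bij_def inj_eq)
qed simp

lemma zpow_semiconj:
  assumes "bij T" "bij S" "\<And>x. h (T x) = S (h x)"
  shows "h (zpow T n x) = zpow S n (h x)"
proof (induction n rule: int_induct[where k=0])
  case (step1 i)
  then show ?case using zpow_succ[OF assms(1)] zpow_succ[OF assms(2)] assms(3) by simp
next
  case (step2 i)
  have "S (h (zpow T (i - 1) x)) = S (zpow S (i - 1) (h x))"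
    using step2 assms(3) zpow_succ[OF assms(1), of "i - 1"] zpow_succ[OF assms(2), of "i - 1"]
    by simp
  then show ?case using assms(2) by (simp add: bij_def inj_eq)
qed simp

lemma translate_in_bcontfun: "(\<lambda>n. apply_bcontfun d (n + c)) \<in> bcontfun"
  for d :: "int \<Rightarrow>\<^sub>C real"
  by (rule bcontfun_normI[where b="norm d", OF Topological_Spaces.continuous_on_discrete]) (rule norm_bounded)

lemma shift_apply: "apply_bcontfun (shift d) n = apply_bcontfun d (n + 1)"
  unfolding shift_def using translate_in_bcontfun[of d 1] by (simp add: Bcontfun_inverse)

lemma bij_shift: "bij shift"
proof (rule bijI)
  show "inj shift"
  proof (rule injI)
    fix d e assume "shift d = shift e"
    then have "apply_bcontfun d (n - 1 + 1) = apply_bcontfun e (n - 1 + 1)" for n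
      by (metis shift_apply)
    then show "d = e" by (intro bcontfun_eqI) simp
  qed
  show "surj shift"
  proof (rule surjI)
    fix d :: "int \<Rightarrow>\<^sub>C real"
    have "(\<lambda>n. apply_bcontfun d (n - 1)) \<in> bcontfun"
      using translate_in_bcontfun[of d "- 1"] by simp
    then show "shift (Bcontfun (\<lambda>n. apply_bcontfun d (n - 1))) = d"
      by (intro bcontfun_eqI) (simp add: shift_apply Bcontfun_inverse)
  qed
qed

lemma orbit_seq_apply:
  assumes "\<And>x. \<bar>f x\<bar> \<le> B"
  shows "apply_bcontfun (orbit_seq f T x) n = f (zpow T n x)"
proof -
  have "(\<lambda>n. f (zpow T n x)) \<in> bcontfun"
    by (rule bcontfun_normI[where b=B, OF Topological_Spaces.continuous_on_discrete]) (simp add: assms)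
  then show ?thesis by (simp add: orbit_seq_def Bcontfun_inverse)
qed

lemma zpow_shift_orbit_seq:
  assumes "\<And>x. \<bar>f x\<bar> \<le> B" and "bij T"
  shows "zpow shift k (orbit_seq f T x) = orbit_seq f T (zpow T k x)"
proof -
  have "orbit_seq f T (T x) = shift (orbit_seq f T x)" for x
  proof (rule bcontfun_eqI)
    fix n
    have "zpow T n (T x) = zpow T (n + 1) x"
      using zpow_add[OF assms(2), of n 1 x] zpow_succ[OF assms(2), of 0 x] by simp
    then show "apply_bcontfun (orbit_seq f T (T x)) n = apply_bcontfun (shift (orbit_seq f T x)) n"
      by (simp add: shift_apply orbit_seq_apply[OF assms(1)])
  qed
  from zpow_semiconj[of T shift "orbit_seq f T", OF assms(2) bij_shift this] show ?thesis
    by (rule sym)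
qed

section \<open>Additive subgroups and weighted indicator sums\<close>

definition add_subgroup :: "'a::ab_group_add set \<Rightarrow> bool" where
  "add_subgroup H \<longleftrightarrow> 0 \<in> H \<and> (\<forall>x\<in>H. \<forall>y\<in>H. x + y \<in> H) \<and> (\<forall>x\<in>H. - x \<in> H)"

lemma add_subgroup_add_iff:
  assumes "add_subgroup H" "y \<in> H"
  shows "x + y \<in> H \<longleftrightarrow> x \<in> H"
  using assms unfolding add_subgroup_def by (metis add.commute add_minus_cancel)

lemma add_subgroup_diff:
  assumes "add_subgroup H" "x \<in> H" "y \<in> H"
  shows "x - y \<in> H"
  using assms unfolding add_subgroup_def by (metis diff_conv_add_uminus)

lemma translation_image_eq_vimage: "(\<lambda>x. a + x) ` S = (\<lambda>x::'a::ab_group_add. x + - a) -` S"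
  by (auto intro: rev_image_eqI[of "_ + - a"])

definition indicator_series :: "(nat \<Rightarrow> 'a set) \<Rightarrow> 'a \<Rightarrow> real" where
  "indicator_series U x = (\<Sum>m. (1/2) ^ m * indicator (U m) x)"

lemma summable_indicator_series: "summable (\<lambda>m. (1/2::real) ^ m * indicator (U m) x)"
  by (rule summable_comparison_test'[of "\<lambda>m. (1/2::real) ^ m"]) (simp_all add: indicator_def)

lemma indicator_series_bounded: "\<bar>indicator_series U x\<bar> \<le> 2"
proof -
  have "norm (indicator_series U x) \<le> (\<Sum>m. (1/2::real) ^ m)"
    unfolding indicator_series_def
    by (rule norm_suminf_le) (simp_all add: indicator_def)
  then show ?thesis by (simp add: suminf_geometric)
qed

lemma indicator_series_translate:
  assumes "\<And>m. m < N \<Longrightarrow> add_subgroup (U m)" and "\<And>m. m < N \<Longrightarrow> u \<in> U m"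
  shows "\<bar>indicator_series U (x + u) - indicator_series U x\<bar> \<le> 2 * (1/2) ^ N"
proof -
  let ?tail = "\<lambda>m. if m < N then 0 else (1/2::real) ^ m"
  have "(\<lambda>i. ?tail (i + N)) sums ((1/2) ^ N * 2)"
    using sums_mult[OF geometric_sums[of "1/2::real"], of "(1/2) ^ N"]
    by (simp add: power_add mult.commute)
  then have "(\<lambda>i. ?tail (i + N)) sums ((1/2) ^ N * 2 - (\<Sum>m<N. ?tail m))"
    by simp
  then have tail_sums: "?tail sums ((1/2) ^ N * 2)"
    by (rule sums_iff_shift'[THEN iffD1])
  have "indicator_series U (x + u) - indicator_series U x
      = (\<Sum>m. (1/2) ^ m * indicator (U m) (x + u) - (1/2) ^ m * indicator (U m) x)"
    unfolding indicator_series_def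
    by (rule suminf_diff[OF summable_indicator_series summable_indicator_series])
  also have "norm \<dots> \<le> (\<Sum>m. ?tail m)"
  proof (rule norm_suminf_le)
    fix m
    show "norm ((1/2::real) ^ m * indicator (U m) (x + u) - (1/2) ^ m * indicator (U m) x) \<le> ?tail m"
      using add_subgroup_add_iff[OF assms, of m x] by (simp add: indicator_def)
  qed (use tail_sums in \<open>simp add: sums_iff\<close>)
  finally show ?thesis using tail_sums by (simp add: sums_iff)
qed

lemma indicator_series_eq_at_0:
  assumes "\<And>m. 0 \<in> U m" and "indicator_series U p = indicator_series U 0"
  shows "p \<in> U m"
proof -
  let ?d = "\<lambda>m. (1/2::real) ^ m - (1/2) ^ m * indicator (U m) p"
  have "(\<lambda>m. (1/2::real) ^ m * indicator (U m) 0) = (\<lambda>m. (1/2) ^ m)"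
    using assms(1) by simp
  then have "(\<Sum>m. ?d m) = indicator_series U 0 - indicator_series U p"
    unfolding indicator_series_def
    using suminf_diff[OF summable_geometric summable_indicator_series, of "1/2" U p] by simp
  also have "\<dots> = 0" using assms(2) by simp
  finally have "(\<Sum>m. ?d m) = 0" .
  moreover have "summable ?d"
    by (intro summable_diff summable_geometric summable_indicator_series) simp
  ultimately have "\<forall>m. ?d m = 0"
    using suminf_eq_zero_iff[of ?d] by (simp add: indicator_def)
  then show ?thesis by (simp add: indicator_def split: if_splits)
qed

definition translation_uniformly_continuous ::
    "('a::{topological_space, ab_group_add} \<Rightarrow> 'b::metric_space) \<Rightarrow> bool" where
  "translation_uniformly_continuous f \<longleftrightarrow>
     (\<forall>e>0. \<exists>U. open U \<and> 0 \<in> U \<and> (\<forall>u\<in>U. \<forall>x. dist (f (x + u)) (f x) \<le> e))"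

lemma translation_uniformly_continuous_indicator_series:
  assumes "\<And>m. open (U m)" and "\<And>m. add_subgroup (U m)"
  shows "translation_uniformly_continuous (indicator_series U)"
  unfolding translation_uniformly_continuous_def
proof (intro allI impI)
  fix e :: real assume "e > 0"
  then obtain N where N: "(1/2::real) ^ N < e / 2"
    using real_arch_pow_inv[of "e/2" "1/2"] by auto
  have "dist (indicator_series U (x + u)) (indicator_series U x) \<le> e" if "u \<in> (\<Inter>m<N. U m)" for u x
  proof -
    have "\<bar>indicator_series U (x + u) - indicator_series U x\<bar> \<le> 2 * (1/2) ^ N"
      using assms(2) that by (intro indicator_series_translate) auto
    with N show ?thesis by (simp add: dist_real_def)
  qed
  moreover have "open (\<Inter>m<N. U m)" "0 \<in> (\<Inter>m<N. U m)"
    using assms by (auto simp: add_subgroup_def intro!: open_INT)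
  ultimately show "\<exists>V. open V \<and> 0 \<in> V \<and>
      (\<forall>u\<in>V. \<forall>x. dist (indicator_series U (x + u)) (indicator_series U x) \<le> e)"
    by blast
qed

lemma translation_uniformly_continuous_orbit:
  fixes f :: "'a::{topological_space, ab_group_add} \<Rightarrow> real"
  assumes "translation_uniformly_continuous f" and "\<And>x. \<bar>f x\<bar> \<le> B"
  shows "translation_uniformly_continuous (\<lambda>x. Bcontfun (\<lambda>n::int. f (x + c n)))"
  unfolding translation_uniformly_continuous_def
proof (intro allI impI)
  fix e :: real assume "e > 0"
  then obtain U where U: "open U" "0 \<in> U" "\<forall>u\<in>U. \<forall>x. dist (f (x + u)) (f x) \<le> e"
    using assms(1) unfolding translation_uniformly_continuous_def by blast
  have in_bcontfun: "(\<lambda>n::int. f (x + c n)) \<in> bcontfun" for x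
    by (rule bcontfun_normI[where b=B, OF Topological_Spaces.continuous_on_discrete]) (simp add: assms(2))
  have "dist (Bcontfun (\<lambda>n. f (x + u + c n))) (Bcontfun (\<lambda>n. f (x + c n))) \<le> e" if "u \<in> U" for x u
  proof (rule dist_bound)
    fix n
    have "dist (f (x + c n + u)) (f (x + c n)) \<le> e" using U(3) that by blast
    moreover have "x + c n + u = x + u + c n" by (simp add: algebra_simps)
    ultimately show "dist (apply_bcontfun (Bcontfun (\<lambda>n. f (x + u + c n))) n)
        (apply_bcontfun (Bcontfun (\<lambda>n. f (x + c n))) n) \<le> e"
      by (simp only: Bcontfun_inverse[OF in_bcontfun])
  qed
  with U(1,2) show "\<exists>U. open U \<and> 0 \<in> U \<and>
      (\<forall>u\<in>U. \<forall>x. dist (Bcontfun (\<lambda>n. f (x + u + c n))) (Bcontfun (\<lambda>n. f (x + c n))) \<le> e)"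
    by blast
qed

section \<open>Topological abelian groups\<close>

context
  assumes continuous_add: "continuous_on UNIV (\<lambda>(x::'a::{t2_space, ab_group_add}, y). x + y)"
    and continuous_uminus: "continuous_on UNIV (uminus :: 'a \<Rightarrow> 'a)"
begin

lemma continuous_on_add_pair: "continuous_on UNIV (\<lambda>p::'a \<times> 'a. fst p + snd p)"
  using continuous_add by (simp add: case_prod_beta)

lemma continuous_on_add_fun:
  assumes "continuous_on S f" "continuous_on S h"
  shows "continuous_on S (\<lambda>x. f x + h x :: 'a)"
  using continuous_on_compose2[OF continuous_on_add_pair continuous_on_Pair[OF assms]] by simp

lemma continuous_on_translation: "continuous_on UNIV (\<lambda>x::'a. x + a)"
  by (intro continuous_on_add_fun continuous_on_id continuous_on_const)

lemma open_translation: "open S \<Longrightarrow> open ((\<lambda>x::'a. a + x) ` S)"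
  unfolding translation_image_eq_vimage by (rule open_vimage[OF _ continuous_on_translation])

lemma closed_translation: "closed S \<Longrightarrow> closed ((\<lambda>x::'a. a + x) ` S)"
  unfolding translation_image_eq_vimage by (rule closed_vimage[OF _ continuous_on_translation])

lemma add_subgroup_closure:
  assumes "add_subgroup (S::'a set)"
  shows "add_subgroup (closure S)"
proof -
  have add: "(\<lambda>p. fst p + snd p) ` closure (S \<times> S) \<subseteq> closure S"
    using assms continuous_on_add_pair
    by (intro image_closure_subset)
      (auto simp: add_subgroup_def intro: continuous_on_subset closure_subset[THEN subsetD])
  have neg: "uminus ` closure S \<subseteq> closure S"
    using assms continuous_uminus
    by (intro image_closure_subset)
      (auto simp: add_subgroup_def intro: continuous_on_subset closure_subset[THEN subsetD])
  show ?thesis unfolding add_subgroup_def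
  proof (intro conjI ballI)
    show "0 \<in> closure S" using assms closure_subset by (auto simp: add_subgroup_def)
    fix x y assume "x \<in> closure S" "y \<in> closure S"
    then have "(x, y) \<in> closure (S \<times> S)" by (simp add: closure_Times)
    with add show "x + y \<in> closure S" by force
  next
    fix x assume "x \<in> closure S"
    with neg show "- x \<in> closure S" by blast
  qed
qed

lemma open_add_subgroup_closed:
  assumes "open (H::'a set)" "add_subgroup H"
  shows "closed H"
proof -
  have "0 \<in> H" using assms(2) by (simp add: add_subgroup_def)
  then have "- H = (\<Union>x\<in>-H. (\<lambda>h. x + h) ` H)"
    using add_subgroup_add_iff[OF assms(2)] by (auto intro!: UN_I image_eqI[where x=0])
  moreover have "open (\<Union>x\<in>-H. (\<lambda>h. x + h) ` H)"
    using open_translation[OF assms(1)] by blast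
  ultimately show ?thesis by (simp add: closed_def)
qed

lemma closed_add_subgroup_finite_cover_open:
  assumes "closed (H::'a set)" "add_subgroup H" "finite R" "UNIV = (\<Union>r\<in>R. (\<lambda>h. r + h) ` H)"
  shows "open H"
proof -
  let ?R = "{r\<in>R. r \<notin> H}"
  have "- H = (\<Union>r\<in>?R. (\<lambda>h. r + h) ` H)"
  proof
    show "- H \<subseteq> (\<Union>r\<in>?R. (\<lambda>h. r + h) ` H)"
    proof
      fix x assume x: "x \<in> - H"
      have "x \<in> (\<Union>r\<in>R. (\<lambda>h. r + h) ` H)" using assms(4) by blast
      then obtain r h where "r \<in> R" "h \<in> H" "x = r + h" by blast
      moreover from this have "r \<notin> H"
        using x add_subgroup_add_iff[OF assms(2)] by auto
      ultimately show "x \<in> (\<Union>r\<in>?R. (\<lambda>h. r + h) ` H)" by blast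
    qed
    show "(\<Union>r\<in>?R. (\<lambda>h. r + h) ` H) \<subseteq> - H"
      using add_subgroup_add_iff[OF assms(2)] by blast
  qed
  moreover have "closed (\<Union>r\<in>?R. (\<lambda>h. r + h) ` H)"
    using assms(1,3) by (intro closed_UN ballI closed_translation) auto
  ultimately show ?thesis by (simp add: open_closed)
qed

lemma open_add_subgroup_in_clopen:
  assumes "compact (UNIV::'a set)" and "open (C::'a set)" "closed C" "0 \<in> C"
  shows "\<exists>H. open H \<and> add_subgroup H \<and> H \<subseteq> C"
proof -
  define W where "W = (\<lambda>p::'a\<times>'a. fst p + snd p) -` C \<inter> (\<lambda>p. - fst p + snd p) -` C"
  have "continuous_on UNIV (\<lambda>p::'a\<times>'a. - fst p + snd p)"
    by (intro continuous_on_add_fun continuous_on_snd continuous_on_id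
        continuous_on_compose2[OF continuous_uminus continuous_on_fst]) auto
  then have "open W"
    unfolding W_def using assms(2) continuous_on_add_pair by (intro open_Int open_vimage)
  moreover have "compact C" using compact_Int_closed[OF assms(1,3)] by simp
  moreover have "{0} \<times> C \<subseteq> W" by (auto simp: W_def)
  ultimately obtain X0 where X0: "0 \<in> X0" "open X0" "X0 \<times> C \<subseteq> W"
    using Elementary_Topology.tube_lemma[of C W 0] by blast
  txt \<open>The stabiliser of \<open>C\<close> is a subgroup; it contains the neighbourhood \<open>X0\<close> of \<open>0\<close>, so it is open.\<close>
  define H where "H = {g. \<forall>c\<in>C. g + c \<in> C \<and> - g + c \<in> C}"
  have "add_subgroup H"
    unfolding add_subgroup_def
  proof (intro conjI ballI)
    show "0 \<in> H" by (simp add: H_def)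
    fix g h assume g: "g \<in> H" and h: "h \<in> H"
    show "g + h \<in> H" unfolding H_def
    proof (intro CollectI ballI conjI)
      fix c assume "c \<in> C"
      with g h show "g + h + c \<in> C" by (simp add: H_def add.assoc)
      from \<open>c \<in> C\<close> g h have "- h + (- g + c) \<in> C" by (simp add: H_def)
      then show "- (g + h) + c \<in> C" by (simp add: algebra_simps)
    qed
  next
    fix g assume "g \<in> H"
    then show "- g \<in> H" by (simp add: H_def add.commute)
  qed
  have "X0 \<subseteq> H" using X0(3) by (auto simp: H_def W_def)
  have "H = (\<Union>h\<in>H. (\<lambda>x. h + x) ` X0)"
  proof
    show "H \<subseteq> (\<Union>h\<in>H. (\<lambda>x. h + x) ` X0)"
    proof
      fix h assume "h \<in> H"
      moreover have "h = h + 0" by simp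
      ultimately show "h \<in> (\<Union>h\<in>H. (\<lambda>x. h + x) ` X0)" using X0(1) by blast
    qed
    show "(\<Union>h\<in>H. (\<lambda>x. h + x) ` X0) \<subseteq> H"
      using \<open>X0 \<subseteq> H\<close> \<open>add_subgroup H\<close> unfolding add_subgroup_def by blast
  qed
  moreover have "open (\<Union>h\<in>H. (\<lambda>x. h + x) ` X0)" using open_translation[OF X0(2)] by blast
  ultimately have "open H" by simp
  moreover have "H \<subseteq> C"
  proof
    fix g assume "g \<in> H"
    then have "g + 0 \<in> C" using assms(4) unfolding H_def by blast
    then show "g \<in> C" by simp
  qed
  ultimately show ?thesis using \<open>add_subgroup H\<close> by blast
qed

lemma continuous_on_if_translation_uniformly_continuous:
  fixes f :: "'a \<Rightarrow> 'b::metric_space"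
  assumes "translation_uniformly_continuous f"
  shows "continuous_on UNIV f"
  unfolding continuous_on_topological
proof (intro ballI allI impI)
  fix x B assume "open B" "f x \<in> B"
  then obtain e where e: "e > 0" "ball (f x) e \<subseteq> B" by (meson openE)
  obtain U where U: "open U" "0 \<in> U" "\<forall>u\<in>U. \<forall>x. dist (f (x + u)) (f x) \<le> e / 2"
    using assms e(1) unfolding translation_uniformly_continuous_def by (meson half_gt_zero)
  have "f y \<in> B" if "y \<in> (\<lambda>y. y + - x) -` U" for y
  proof -
    have "y - x \<in> U" using that by simp
    then have "dist (f (x + (y - x))) (f x) \<le> e / 2" using U(3) by blast
    then show ?thesis using e by (auto simp: dist_commute)
  qed
  moreover have "open ((\<lambda>y. y + - x) -` U)" by (rule open_vimage[OF U(1) continuous_on_translation])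
  moreover have "x \<in> (\<lambda>y. y + - x) -` U" using U(2) by simp
  ultimately show "\<exists>A. open A \<and> x \<in> A \<and> (\<forall>y\<in>UNIV. y \<in> A \<longrightarrow> f y \<in> B)" by blast
qed

lemma hull_tgroup_transport:
  fixes g :: "(int \<Rightarrow>\<^sub>C real) \<Rightarrow> 'a"
  assumes hom: "homeomorphism UNIV (shift_hull d) F g"
    and orbit: "\<And>k. zpow shift k d = F (c k)" and additive: "\<And>j k. c (j + k) = c j + c k"
  shows "hull_tgroup d \<lparr>carrier = shift_hull d, mult = \<lambda>a b. F (g a + g b), one = F 0\<rparr>"
    (is "hull_tgroup d ?G")
proof -
  let ?S = "shift_hull d"
  have gF: "g (F x) = x" for x using hom by (simp add: homeomorphism_def)
  have Fg: "y \<in> ?S \<Longrightarrow> F (g y) = y" for y using hom by (simp add: homeomorphism_def)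
  have F_cont: "continuous_on UNIV F" and g_cont: "continuous_on ?S g" and F_range: "range F = ?S"
    using hom by (simp_all add: homeomorphism_def)
  have "c 0 = 0" using additive[of 0 0] by (metis add_cancel_left_right)
  then have d: "F 0 = d" using orbit[of 0] by simp
  have group: "group ?G"
  proof (rule groupI)
    fix x assume "x \<in> carrier ?G"
    then show "\<one>\<^bsub>?G\<^esub> \<otimes>\<^bsub>?G\<^esub> x = x" by (simp add: gF Fg)
    show "\<exists>y\<in>carrier ?G. y \<otimes>\<^bsub>?G\<^esub> x = \<one>\<^bsub>?G\<^esub>"
      using F_range by (intro bexI[of _ "F (- g x)"]) (auto simp: gF)
  qed (use F_range in \<open>auto simp: gF add.assoc\<close>)
  have inv: "inv\<^bsub>?G\<^esub> x = F (- g x)" if "x \<in> ?S" for x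
    using that F_range by (intro group.inv_equality[OF group]) (auto simp: gF)
  have g_pair: "continuous_on (?S \<times> ?S) (\<lambda>p. g (fst p) + g (snd p))"
    by (intro continuous_on_add_fun continuous_on_compose2[OF g_cont]
        continuous_on_fst continuous_on_snd continuous_on_id) auto
  have "continuous_on (?S \<times> ?S) (\<lambda>(x, y). x \<otimes>\<^bsub>?G\<^esub> y)"
    using continuous_on_compose2[OF F_cont g_pair] by (simp add: case_prod_beta)
  moreover have "continuous_on ?S (\<lambda>x. inv\<^bsub>?G\<^esub> x)"
  proof (rule continuous_on_cong[THEN iffD2, OF refl])
    show "continuous_on ?S (\<lambda>x. F (- g x))"
      by (intro continuous_on_compose2[OF F_cont] continuous_on_compose2[OF continuous_uminus g_cont]) auto
  qed (simp add: inv)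
  ultimately show ?thesis
    unfolding hull_tgroup_def using group by (simp add: d orbit additive gF)
qed

lemma hull_tgroup_iso:
  fixes g :: "(int \<Rightarrow>\<^sub>C real) \<Rightarrow> 'a"
  assumes hom: "homeomorphism UNIV (shift_hull d) F g"
    and orbit: "\<And>k. zpow shift k d = F (c k)" and additive: "\<And>j k. c (j + k) = c j + c k"
    and G: "hull_tgroup d G"
  shows "tgroup_iso_to G g"
proof -
  let ?S = "shift_hull d" and ?O = "range (\<lambda>k. zpow shift k d)"
  have gF: "g (F x) = x" for x using hom by (simp add: homeomorphism_def)
  have g_cont: "continuous_on ?S g" using hom by (simp add: homeomorphism_def)
  have carrier: "carrier G = ?S" and group: "group G"
    and mult_cont: "continuous_on (?S \<times> ?S) (\<lambda>p. fst p \<otimes>\<^bsub>G\<^esub> snd p)"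
    and mult_orbit: "\<And>j k. zpow shift (j + k) d = zpow shift j d \<otimes>\<^bsub>G\<^esub> zpow shift k d"
    using G by (auto simp: hull_tgroup_def case_prod_beta)
  have closure_orbit: "closure (?O \<times> ?O) = ?S \<times> ?S"
    by (simp add: closure_Times shift_hull_def)
  have "g (x \<otimes>\<^bsub>G\<^esub> y) = g x + g y" if "x \<in> ?S" "y \<in> ?S" for x y
  proof -
    have "continuous_on (?S \<times> ?S) (\<lambda>p. g (fst p \<otimes>\<^bsub>G\<^esub> snd p))"
      using monoid.m_closed[OF group.is_monoid[OF group]] carrier
      by (intro continuous_on_compose2[OF g_cont mult_cont]) auto
    moreover have "continuous_on (?S \<times> ?S) (\<lambda>p. g (fst p) + g (snd p))"
      by (intro continuous_on_add_fun continuous_on_compose2[OF g_cont]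
          continuous_on_fst continuous_on_snd continuous_on_id) auto
    moreover have "g (fst p \<otimes>\<^bsub>G\<^esub> snd p) = g (fst p) + g (snd p)" if in_orbit: "p \<in> ?O \<times> ?O" for p
    proof -
      obtain j k where p: "p = (zpow shift j d, zpow shift k d)" using in_orbit by auto
      then have "fst p \<otimes>\<^bsub>G\<^esub> snd p = zpow shift (j + k) d" by (simp add: mult_orbit)
      then show ?thesis by (simp add: p orbit gF additive)
    qed
    ultimately show ?thesis
      using continuous_on_closure_eq[of "?O \<times> ?O"
          "\<lambda>p. g (fst p \<otimes>\<^bsub>G\<^esub> snd p)" "\<lambda>p. g (fst p) + g (snd p)" "(x, y)"]
        that by (simp add: closure_orbit)
  qed
  with homeomorphism_symD[OF hom] show ?thesis
    unfolding tgroup_iso_to_def carrier by blast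
qed

section \<open>Minimal translations of Cantor groups\<close>

context
  fixes T :: "'a \<Rightarrow> 'a" and w0 :: 'a
  assumes compact_UNIV: "compact (UNIV :: 'a set)"
    and totally_disconnected: "totally_disconnected_space TYPE('a)"
    and no_isolated: "\<And>x::'a. \<not> open {x}"
    and translation: "\<And>x. T x = x + w0"
    and minimal: "minimal_map T"
begin

lemma bij_translation: "bij T"
  by (rule bij_betw_byWitness[of _ "\<lambda>x. x - w0"]) (auto simp: translation)

definition orbit0 :: "int \<Rightarrow> 'a" where
  "orbit0 n = zpow T n 0"

lemma zpow_translation: "zpow T n x = x + orbit0 n"
  using zpow_semiconj[OF bij_translation bij_translation, of "\<lambda>y. x + y" n 0]
  by (simp add: translation orbit0_def add.assoc)

lemma orbit0_add: "orbit0 (j + k) = orbit0 j + orbit0 k"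
  using zpow_add[OF bij_translation, of j k 0]
  by (simp add: orbit0_def zpow_translation[of j] add.commute flip: orbit0_def)

lemma orbit0_0 [simp]: "orbit0 0 = 0"
  by (simp add: orbit0_def)

lemma orbit0_uminus: "orbit0 (- n) = - orbit0 n"
  using orbit0_add[of n "- n"] by (simp add: eq_neg_iff_add_eq_0 add.commute)

lemma closure_range_orbit0: "closure (range orbit0) = UNIV"
  using minimal unfolding minimal_map_def orbit0_def by blast

lemma orbit0_multiple_in_subgroup:
  assumes "add_subgroup H" "orbit0 k \<in> H"
  shows "orbit0 (k * j) \<in> H"
proof (induction j rule: int_induct[where k=0])
  case (step1 i)
  then show ?case using assms orbit0_add[of "k * i" k] by (simp add: add_subgroup_def distrib_left)
next
  case (step2 i)
  then show ?case using assms orbit0_add[of "k * i" "- k"]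
    by (simp add: add_subgroup_diff orbit0_uminus right_diff_distrib)
qed (use assms in \<open>simp add: add_subgroup_def\<close>)

definition orbit_subgroup :: "nat \<Rightarrow> 'a set" where
  "orbit_subgroup n = closure (range (\<lambda>j. orbit0 (int n * j)))"

lemma add_subgroup_orbit_subgroup: "add_subgroup (orbit_subgroup n)"
  unfolding orbit_subgroup_def
proof (rule add_subgroup_closure)
  show "add_subgroup (range (\<lambda>j. orbit0 (int n * j)))"
    unfolding add_subgroup_def
    by (auto simp: orbit0_uminus simp flip: orbit0_add distrib_left
        intro: range_eqI[of _ _ 0] range_eqI[where x="- j" for j])
qed

lemma orbit_subgroup_cover:
  assumes "n \<ge> 1"
  shows "UNIV = (\<Union>r\<in>orbit0 ` {0..<int n}. (\<lambda>h. r + h) ` orbit_subgroup n)"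
proof -
  let ?R = "orbit0 ` {0..<int n}"
  have "orbit0 k \<in> (\<Union>r\<in>?R. (\<lambda>h. r + h) ` orbit_subgroup n)" for k
  proof -
    have "orbit0 k = orbit0 (k mod int n) + orbit0 (int n * (k div int n))"
      by (simp flip: orbit0_add)
    moreover have "orbit0 (int n * (k div int n)) \<in> orbit_subgroup n"
      unfolding orbit_subgroup_def by (intro closure_subset[THEN subsetD]) auto
    moreover have "k mod int n \<in> {0..<int n}" using assms by simp
    ultimately show ?thesis by blast
  qed
  then have "closure (range orbit0) \<subseteq> (\<Union>r\<in>?R. (\<lambda>h. r + h) ` orbit_subgroup n)"
    by (intro closure_minimal closed_UN ballI closed_translation) (auto simp: orbit_subgroup_def)
  then show ?thesis using closure_range_orbit0 by blast
qed

lemma open_orbit_subgroup: "n \<ge> 1 \<Longrightarrow> open (orbit_subgroup n)"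
  by (rule closed_add_subgroup_finite_cover_open[OF _ add_subgroup_orbit_subgroup _ orbit_subgroup_cover])
    (simp_all add: orbit_subgroup_def)

lemma orbit_subgroup_in_nbhd:
  assumes "open V" "0 \<in> V"
  shows "\<exists>n\<ge>1. orbit_subgroup n \<subseteq> V"
proof -
  obtain C where C: "open C" "closed C" "0 \<in> C" "C \<subseteq> V"
    using compact_totally_disconnected_clopen_nbhd[OF compact_UNIV totally_disconnected assms] by blast
  obtain H where H: "open H" "add_subgroup H" "H \<subseteq> C"
    using open_add_subgroup_in_clopen[OF compact_UNIV C(1-3)] by blast
  have "0 \<in> H" using H(2) by (simp add: add_subgroup_def)
  have "H - {0} \<noteq> {}"
  proof
    assume "H - {0} = {}"
    with \<open>0 \<in> H\<close> have "H = {0}" by blast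
    with H(1) no_isolated show False by simp
  qed
  moreover have "open (H - {0})" using H(1) by (intro open_Diff) auto
  ultimately have "(H - {0}) \<inter> range orbit0 \<noteq> {}"
    using open_Int_closure_eq_empty[of "H - {0}" "range orbit0"] closure_range_orbit0 by simp
  then obtain k where k: "orbit0 k \<in> H" "orbit0 k \<noteq> 0" by auto
  then have "k \<noteq> 0" by auto
  have "range (\<lambda>j. orbit0 (int (nat \<bar>k\<bar>) * j)) \<subseteq> H"
  proof clarify
    fix j
    have "int (nat \<bar>k\<bar>) = k * sgn k" by (simp add: abs_sgn[symmetric])
    then have "int (nat \<bar>k\<bar>) * j = k * (sgn k * j)" by (simp only: mult.assoc)
    then show "orbit0 (int (nat \<bar>k\<bar>) * j) \<in> H"
      using orbit0_multiple_in_subgroup[OF H(2) k(1), of "sgn k * j"] by (simp only:)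
  qed
  then have "orbit_subgroup (nat \<bar>k\<bar>) \<subseteq> H"
    unfolding orbit_subgroup_def using open_add_subgroup_closed[OF H(1,2)] by (rule closure_minimal)
  then show ?thesis using \<open>k \<noteq> 0\<close> H(3) C(4) by (intro exI[of _ "nat \<bar>k\<bar>"]) auto
qed

text \<open>The index is shifted because \<open>orbit_subgroup 0 = {0}\<close> is not open.\<close>

definition separating_function :: "'a \<Rightarrow> real" where
  "separating_function = indicator_series (\<lambda>m. orbit_subgroup (Suc m))"

lemma separating_function_bounded: "\<bar>separating_function x\<bar> \<le> 2"
  by (simp add: separating_function_def indicator_series_bounded)

lemma translation_uniformly_continuous_separating_function:
  "translation_uniformly_continuous separating_function"
  unfolding separating_function_def
  by (intro translation_uniformly_continuous_indicator_series open_orbit_subgroup add_subgroup_orbit_subgroup) simp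

lemma separating_function_eq_at_0:
  assumes "separating_function p = separating_function 0"
  shows "p = 0"
proof (rule ccontr)
  assume "p \<noteq> 0"
  then have "open (- {p})" "0 \<in> - {p}" by auto
  then obtain n where n: "n \<ge> 1" "orbit_subgroup n \<subseteq> - {p}"
    using orbit_subgroup_in_nbhd by blast
  have "0 \<in> orbit_subgroup m" for m
    using add_subgroup_orbit_subgroup by (simp add: add_subgroup_def)
  then have "p \<in> orbit_subgroup (Suc (n - 1))"
    using assms unfolding separating_function_def by (rule indicator_series_eq_at_0)
  with n show False by auto
qed

definition orbit_map :: "'a \<Rightarrow> (int \<Rightarrow>\<^sub>C real)" where
  "orbit_map = orbit_seq separating_function T"

lemma orbit_map_eq: "orbit_map x = Bcontfun (\<lambda>n. separating_function (x + orbit0 n))"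
  by (simp add: orbit_map_def orbit_seq_def zpow_translation)

lemma continuous_orbit_map: "continuous_on UNIV orbit_map"
  unfolding orbit_map_eq[abs_def]
  by (intro continuous_on_if_translation_uniformly_continuous
      translation_uniformly_continuous_orbit[where B=2]
      translation_uniformly_continuous_separating_function separating_function_bounded)

lemma inj_orbit_map: "inj orbit_map"
proof (rule injI)
  fix x y assume eq: "orbit_map x = orbit_map y"
  have app: "apply_bcontfun (orbit_map v) n = separating_function (v + orbit0 n)" for v n
    using orbit_seq_apply[of separating_function, OF separating_function_bounded]
    by (simp add: orbit_map_def zpow_translation)
  have on_orbit: "separating_function (x + w) = separating_function (y + w)" if "w \<in> range orbit0" for w
    using that app[of x] app[of y] eq by auto
  have cont: "continuous_on UNIV (\<lambda>w. separating_function (a + w))" for a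
    by (intro continuous_on_compose2[OF continuous_on_if_translation_uniformly_continuous]
        translation_uniformly_continuous_separating_function
        continuous_on_add_fun continuous_on_const continuous_on_id) auto
  have "separating_function (x + w) = separating_function (y + w)" for w
    using continuous_on_closure_eq[of "range orbit0"
        "\<lambda>w. separating_function (x + w)" "\<lambda>w. separating_function (y + w)" w]
      cont on_orbit by (simp add: closure_range_orbit0)
  from this[of "- x"] have "y - x = 0" by (intro separating_function_eq_at_0) simp
  then show "x = y" by simp
qed

lemma zpow_shift_orbit_map: "zpow shift k (orbit_map 0) = orbit_map (orbit0 k)"
  unfolding orbit_map_def orbit0_def
  by (rule zpow_shift_orbit_seq[OF separating_function_bounded bij_translation])

lemma homeomorphism_orbit_map: "\<exists>g. homeomorphism UNIV (shift_hull (orbit_map 0)) orbit_map g"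
proof -
  have "closed (range orbit_map)"
    by (intro compact_imp_closed compact_continuous_image continuous_orbit_map compact_UNIV)
  then have "closure (orbit_map ` range orbit0) = range orbit_map"
    using continuous_image_closure_subset[OF continuous_orbit_map, of "range orbit0"] closure_range_orbit0
    by (intro equalityI closure_minimal) auto
  then have "shift_hull (orbit_map 0) = range orbit_map"
    by (simp add: shift_hull_def zpow_shift_orbit_map image_image flip: image_def)
  then show ?thesis
    using homeomorphism_compact[OF compact_UNIV continuous_orbit_map refl inj_orbit_map] by simp
qed

lemma ex_continuous_function_hull_iso:
  "\<exists>f :: 'a \<Rightarrow> real. continuous_on UNIV f \<and>
     (\<exists>G. hull_tgroup (orbit_seq f T 0) G) \<and>
     (\<forall>G. hull_tgroup (orbit_seq f T 0) G \<longrightarrow> (\<exists>\<phi> :: (int \<Rightarrow>\<^sub>C real) \<Rightarrow> 'a. tgroup_iso_to G \<phi>))"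
proof -
  obtain g where hom: "homeomorphism UNIV (shift_hull (orbit_map 0)) orbit_map g"
    using homeomorphism_orbit_map by blast
  have "continuous_on UNIV separating_function"
    using translation_uniformly_continuous_separating_function
    by (rule continuous_on_if_translation_uniformly_continuous)
  moreover have "hull_tgroup (orbit_map 0)
      \<lparr>carrier = shift_hull (orbit_map 0), mult = \<lambda>a b. orbit_map (g a + g b), one = orbit_map 0\<rparr>"
    by (rule hull_tgroup_transport[OF hom zpow_shift_orbit_map orbit0_add])
  moreover have "tgroup_iso_to G g" if "hull_tgroup (orbit_map 0) G" for G
    by (rule hull_tgroup_iso[OF hom zpow_shift_orbit_map orbit0_add that])
  ultimately show ?thesis
    unfolding orbit_map_def by (intro exI[of _ separating_function] conjI allI impI exI) auto
qed

end

end

theorem lemma4p3: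
  fixes T :: "'a::{t2_space, ab_group_add} \<Rightarrow> 'a"
  assumes "cantor_group TYPE('a)"
    and "is_translation T"
    and "minimal_map T"
  shows "\<exists>f :: 'a \<Rightarrow> real. continuous_on UNIV f \<and>
           (\<exists>G. hull_tgroup (orbit_seq f T 0) G) \<and>
           (\<forall>G. hull_tgroup (orbit_seq f T 0) G \<longrightarrow>
                (\<exists>\<phi> :: (int \<Rightarrow>\<^sub>C real) \<Rightarrow> 'a. tgroup_iso_to G \<phi>))"
proof -
  obtain w0 where "\<And>x. T x = x + w0"
    using assms(2) unfolding is_translation_def by blast
  with assms(1,3) show ?thesis
    unfolding cantor_group_def by (intro ex_continuous_function_hull_iso) auto
qed

end
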